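(* Let $\mathcal{M}\subset\mathbb{R}^n$ be a locally symmetric $C^2$ submanifold. If for some $\bar x\in\mathcal{M}$, $\sigma\in\Sigma^n$ and $\delta>0$ we have $\mathcal{M}\cap B(\bar x,\delta)\subseteq\Delta(\sigma)$, then $\mathcal{M}\subseteq\Delta(\sigma)^{\perp\perp}$.
   Context: $\Sigma^n$ permutations of $\mathbb{N}_n$ acting by $(\sigma x)_i=x_{\sigma^{-1}(i)}$; $P(\sigma)$ orbit partition; $P(x)$ partition in which $i,j$ share a set iff $x_i=x_j$; $\Delta(\sigma)=\{x:P(x)=P(\sigma)\}$; $\Delta(\sigma)^{\perp\perp}=\{x:x_i=x_j$ whenever $i,j$ lie in the same set of $P(\sigma)\}$. $\mathbb{R}^n_\ge=\{x:x_1\ge\cdots\ge x_n\}$; $B$ open ball. A set $S$ is locally symmetric if $S\cap\mathbb{R}^n_\ge\ne\emptyset$ and each $x\in S$ has $\delta>0$ with $\sigma(S\cap B(x,\delta))=S\cap B(x,\delta)$ for all $y\in S\cap B(x,\delta)$, all $\sigma$ with $\sigma y=y$. A locally symmetric $C^2$ submanifold is a connected $C^2$ submanifold without boundary which is a locally symmetric set. *)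

theory Defs
  imports "HOL-Analysis.Analysis" "HOL-Combinatorics.Orbits" "HOL-Combinatorics.Permutations"
begin

text \<open>Vectors in R^n are rendered as real^'n, the index type 'n being finite and
  linearly ordered (the order plays the role of the order on {1..n}).\<close>

definition perm_act :: "('n::finite \<Rightarrow> 'n) \<Rightarrow> real^'n \<Rightarrow> real^'n" where
  "perm_act \<sigma> x = (\<chi> i. x $ (inv \<sigma> i))"

definition orbit_partition :: "('n::finite \<Rightarrow> 'n) \<Rightarrow> 'n set set" where
  "orbit_partition \<sigma> = {orbit \<sigma> i | i. True}"

definition vec_partition :: "real^'n \<Rightarrow> 'n set set" where
  "vec_partition x = {{j. x $ j = x $ i} | i. True}"

definition Delta :: "('n::finite \<Rightarrow> 'n) \<Rightarrow> (real^'n) set" where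
  "Delta \<sigma> = {x. vec_partition x = orbit_partition \<sigma>}"

definition Delta_perp_perp :: "('n::finite \<Rightarrow> 'n) \<Rightarrow> (real^'n) set" where
  "Delta_perp_perp \<sigma> = {x. \<forall>A\<in>orbit_partition \<sigma>. \<forall>i\<in>A. \<forall>j\<in>A. x $ i = x $ j}"

definition ordered_cone :: "(real^'n::{finite,linorder}) set" where
  "ordered_cone = {x. \<forall>i j. i \<le> j \<longrightarrow> x $ j \<le> x $ i}"

definition locally_symmetric :: "(real^'n::{finite,linorder}) set \<Rightarrow> bool" where
  "locally_symmetric S \<longleftrightarrow> S \<inter> ordered_cone \<noteq> {} \<and>
     (\<forall>x\<in>S. \<exists>\<delta>>0. \<forall>y\<in>S \<inter> ball x \<delta>. \<forall>\<sigma>. \<sigma> permutes UNIV \<and> perm_act \<sigma> y = y \<longrightarrow>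
        perm_act \<sigma> ` (S \<inter> ball x \<delta>) = S \<inter> ball x \<delta>)"

definition C2_on :: "(real^'n::finite) set \<Rightarrow> (real^'n \<Rightarrow> real^'n) \<Rightarrow> bool" where
  "C2_on U f \<longleftrightarrow> (\<exists>f' :: real^'n \<Rightarrow> ((real^'n) \<Rightarrow>\<^sub>L (real^'n)).
      \<exists>f'' :: real^'n \<Rightarrow> ((real^'n) \<Rightarrow>\<^sub>L ((real^'n) \<Rightarrow>\<^sub>L (real^'n))).
      (\<forall>x\<in>U. (f has_derivative blinfun_apply (f' x)) (at x)) \<and>
      (\<forall>x\<in>U. (f' has_derivative blinfun_apply (f'' x)) (at x)) \<and>
      continuous_on U f'')"

definition C2_submanifold :: "(real^'n::finite) set \<Rightarrow> bool" where
  "C2_submanifold M \<longleftrightarrow> (\<forall>x\<in>M. \<exists>U V \<phi> \<psi> L.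
      open U \<and> x \<in> U \<and> open V \<and> subspace L \<and>
      \<phi> ` U = V \<and> \<psi> ` V = U \<and> (\<forall>u\<in>U. \<psi> (\<phi> u) = u) \<and> (\<forall>v\<in>V. \<phi> (\<psi> v) = v) \<and>
      C2_on U \<phi> \<and> C2_on V \<psi> \<and> \<phi> ` (M \<inter> U) = V \<inter> L)"

definition locally_symmetric_C2_submanifold :: "(real^'n::{finite,linorder}) set \<Rightarrow> bool" where
  "locally_symmetric_C2_submanifold M \<longleftrightarrow>
     connected M \<and> C2_submanifold M \<and> locally_symmetric M"

end

theory Submission
  imports Defs "HOL-Combinatorics.Cycles"
begin

(* The action s of \<sigma> is a linear map of finite order k, and its orbit sum
   P = \<Sum>i<k. s^i satisfies P \<circ> s = P and P = k \<cdot> id on the fixed space of s, which is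
   Delta_perp_perp \<sigma>. The set of points of M near which M is fixed by s is open in M and
   contains xbar; by connectedness it suffices to show that it is closed. At a limit point x,
   a chart \<psi> maps the model subspace L into the fixed space near chart points of the set, so
   its derivative at \<phi> x maps L into the fixed space. Hence P \<circ> \<psi> has derivative
   k \<cdot> \<psi>'(\<phi> x) on L, which is injective, and P \<circ> \<psi> is injective on L near \<phi> x.
   Local symmetry makes s map M into itself near the fixed point x, so for z \<in> M near x the
   chart points \<phi> z and \<phi> (s z) have the same image P z = P (s z); thus z = s z. *)

lemma perm_act_linear: "linear (perm_act \<sigma>)"
  by (rule linearI) (auto simp: perm_act_def vec_eq_iff)

lemma perm_act_funpow: "((perm_act \<sigma>) ^^ n) x $ i = x $ ((inv \<sigma> ^^ n) i)"
proof (induction n arbitrary: i)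
  case 0
  then show ?case by simp
next
  case (Suc n)
  have "((perm_act \<sigma>) ^^ Suc n) x $ i = ((perm_act \<sigma>) ^^ n) x $ (inv \<sigma> i)"
    by (simp add: perm_act_def)
  also have "\<dots> = x $ ((inv \<sigma> ^^ Suc n) i)"
    by (simp only: Suc funpow_Suc_right o_apply)
  finally show ?case .
qed

lemma perm_act_finite_order:
  fixes \<sigma> :: "'n::finite \<Rightarrow> 'n"
  assumes "\<sigma> permutes UNIV"
  obtains k where "k > 0" "(perm_act \<sigma>) ^^ k = id"
proof -
  have "permutation (inv \<sigma>)"
    using permutes_inv[OF assms] by (intro permutes_imp_permutation) auto
  then obtain k where k: "(inv \<sigma>) ^^ k = id" "k > 0"
    by (rule permutation_is_nilpotent)
  then have "(perm_act \<sigma>) ^^ k = id"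
    by (intro ext) (simp add: vec_eq_iff perm_act_funpow)
  with k that show ?thesis by blast
qed

lemma perm_act_fixed_iff:
  assumes "\<sigma> permutes UNIV"
  shows "perm_act \<sigma> x = x \<longleftrightarrow> (\<forall>i. x $ \<sigma> i = x $ i)"
proof -
  have "perm_act \<sigma> x = x \<longleftrightarrow> (\<forall>i. x $ inv \<sigma> i = x $ i)"
    by (simp add: perm_act_def vec_eq_iff)
  also have "\<dots> \<longleftrightarrow> (\<forall>i. x $ i = x $ \<sigma> i)"
    using permutes_inverses[OF assms] by metis
  finally show ?thesis
    by auto
qed

lemma Delta_perp_perp_eq_fixed_points:
  fixes \<sigma> :: "'n::finite \<Rightarrow> 'n"
  assumes "\<sigma> permutes UNIV"
  shows "Delta_perp_perp \<sigma> = {x. perm_act \<sigma> x = x}"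
proof (intro set_eqI)
  fix x :: "real^'n"
  have "permutation \<sigma>"
    using assms by (intro permutes_imp_permutation) auto
  have "x \<in> Delta_perp_perp \<sigma> \<longleftrightarrow> (\<forall>i. x $ \<sigma> i = x $ i)"
  proof
    assume x: "x \<in> Delta_perp_perp \<sigma>"
    show "\<forall>i. x $ \<sigma> i = x $ i"
    proof
      fix i
      have "i \<in> orbit \<sigma> i" "\<sigma> i \<in> orbit \<sigma> i"
        using \<open>permutation \<sigma>\<close>
        by (auto intro: permutation_self_in_orbit orbit.base)
      then show "x $ \<sigma> i = x $ i"
        using x by (auto simp: Delta_perp_perp_def orbit_partition_def)
    qed
  next
    assume step: "\<forall>i. x $ \<sigma> i = x $ i"
    have "x $ j = x $ i" if "j \<in> orbit \<sigma> i" for i j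
      using that by induction (simp_all add: step)
    then show "x \<in> Delta_perp_perp \<sigma>"
      by (auto simp: Delta_perp_perp_def orbit_partition_def)
  qed
  then show "x \<in> Delta_perp_perp \<sigma> \<longleftrightarrow> x \<in> {x. perm_act \<sigma> x = x}"
    by (simp add: perm_act_fixed_iff[OF assms])
qed

lemma Delta_subset_Delta_perp_perp: "Delta \<sigma> \<subseteq> Delta_perp_perp \<sigma>"
proof
  fix x
  assume "x \<in> Delta \<sigma>"
  then have "orbit_partition \<sigma> = vec_partition x"
    by (simp add: Delta_def)
  then show "x \<in> Delta_perp_perp \<sigma>"
    by (auto simp: Delta_perp_perp_def vec_partition_def)
qed

lemma locally_symmetric_fixed_point:
  assumes "locally_symmetric S" "x \<in> S" "\<sigma> permutes UNIV" "perm_act \<sigma> x = x"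
  shows "\<exists>d>0. perm_act \<sigma> ` (S \<inter> ball x d) \<subseteq> S"
proof -
  obtain d where "d > 0" and d: "\<forall>y\<in>S \<inter> ball x d. \<forall>\<tau>. \<tau> permutes UNIV \<and> perm_act \<tau> y = y \<longrightarrow>
      perm_act \<tau> ` (S \<inter> ball x d) = S \<inter> ball x d"
    using assms(1,2) unfolding locally_symmetric_def by blast
  moreover have "x \<in> S \<inter> ball x d"
    using \<open>d > 0\<close> assms(2) by simp
  ultimately have "perm_act \<sigma> ` (S \<inter> ball x d) = S \<inter> ball x d"
    using assms(3,4) by blast
  with \<open>d > 0\<close> show ?thesis by blast
qed

definition orbit_sum :: "('a::real_vector \<Rightarrow> 'a) \<Rightarrow> nat \<Rightarrow> 'a \<Rightarrow> 'a" where
  "orbit_sum s k z = (\<Sum>i<k. (s ^^ i) z)"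

lemma linear_funpow:
  fixes f :: "'a::real_vector \<Rightarrow> 'a"
  assumes "linear f"
  shows "linear (f ^^ n)"
proof (induction n)
  case 0
  show ?case by (simp add: linear_iff)
next
  case (Suc n)
  show ?case
    using linear_compose[OF Suc.IH assms] by (simp only: funpow.simps(2))
qed

lemma linear_orbit_sum:
  assumes "linear s"
  shows "linear (orbit_sum s k)"
  unfolding orbit_sum_def[abs_def]
  by (intro linear_compose_sum ballI linear_funpow assms)

lemma orbit_sum_apply:
  assumes "s ^^ k = id"
  shows "orbit_sum s k (s z) = orbit_sum s k z"
proof -
  have "orbit_sum s k (s z) + (s ^^ 0) z = (\<Sum>i<Suc k. (s ^^ i) z)"
    unfolding orbit_sum_def
    by (simp only: funpow_Suc_right o_apply sum.lessThan_Suc_shift add.commute)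
  also have "\<dots> = orbit_sum s k z + (s ^^ k) z"
    by (simp add: orbit_sum_def)
  finally show ?thesis
    using assms by simp
qed

lemma orbit_sum_fixed_point:
  assumes "s z = z"
  shows "orbit_sum s k z = real k *\<^sub>R z"
proof -
  have "(s ^^ i) z = z" for i
    by (induction i) (simp_all add: assms)
  then show ?thesis
    by (simp add: orbit_sum_def sum_constant_scaleR)
qed

lemma eventually_nhds_isCont_compose:
  assumes "isCont f x" "\<forall>\<^sub>F y in nhds (f x). P y"
  shows "\<forall>\<^sub>F z in nhds x. P (f z)"
  using assms by (metis filterlim_iff isCont_def tendsto_at_iff_tendsto_nhds)

lemma has_derivative_fixed_on_subspace:
  fixes g :: "'a::real_normed_vector \<Rightarrow> 'b::real_normed_vector"
  assumes s: "bounded_linear s" and g: "(g has_derivative g') (at v)"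
    and L: "subspace L" "v \<in> L" "l \<in> L"
    and fixed: "\<forall>\<^sub>F u in nhds v. u \<in> L \<longrightarrow> s (g u) = g u"
  shows "s (g' l) = g' l"
proof -
  define h where "h t = s (g (v + t *\<^sub>R l)) - g (v + t *\<^sub>R l)" for t :: real
  have line: "((\<lambda>t::real. v + t *\<^sub>R l) has_derivative (\<lambda>t. t *\<^sub>R l)) (at 0)"
    by (auto intro!: derivative_eq_intros)
  have "(g has_derivative g') (at (v + 0 *\<^sub>R l))"
    using g by simp
  then have "((\<lambda>t. g (v + t *\<^sub>R l)) has_derivative (\<lambda>t. g' (t *\<^sub>R l))) (at 0)"
    by (rule has_derivative_compose[OF line])
  then have dh: "(h has_derivative (\<lambda>t. s (g' (t *\<^sub>R l)) - g' (t *\<^sub>R l))) (at 0)"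
    unfolding h_def by (intro has_derivative_diff bounded_linear.has_derivative[OF s])
  have "isCont (\<lambda>t::real. v + t *\<^sub>R l) 0"
    by (intro continuous_intros)
  moreover have "\<forall>\<^sub>F u in nhds (v + 0 *\<^sub>R l). u \<in> L \<longrightarrow> s (g u) = g u"
    using fixed by simp
  ultimately have "\<forall>\<^sub>F t in nhds 0. v + t *\<^sub>R l \<in> L \<longrightarrow> s (g (v + t *\<^sub>R l)) = g (v + t *\<^sub>R l)"
    by (rule eventually_nhds_isCont_compose)
  then have vanish: "\<forall>\<^sub>F t in nhds 0. 0 = h t"
    by (rule eventually_mono) (simp add: h_def L subspace_add subspace_scale)
  have "\<forall>\<^sub>F t in at 0. 0 = h t"
    using vanish unfolding eventually_at_filter by (rule eventually_mono) simp
  then have "(h has_derivative (\<lambda>t. 0)) (at 0)"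
    by (rule has_derivative_transform_eventually[of "\<lambda>t. 0", OF has_derivative_const])
      (use eventually_nhds_x_imp_x[OF vanish] in simp_all)
  then have "(\<lambda>t. s (g' (t *\<^sub>R l)) - g' (t *\<^sub>R l)) = (\<lambda>t. 0)"
    by (rule has_derivative_unique[OF dh])
  from fun_cong[OF this, of 1] show ?thesis
    by simp
qed

lemma inj_on_subspace_ball_of_derivative:
  fixes f :: "'a::real_normed_vector \<Rightarrow> 'b::real_normed_vector"
  assumes "open V" "v0 \<in> V"
    and deriv: "\<And>v. v \<in> V \<Longrightarrow> (f has_derivative blinfun_apply (f' v)) (at v)"
    and cont: "isCont f' v0" and L: "subspace L" and "B > 0"
    and lower: "\<And>w. w \<in> L \<Longrightarrow> norm w \<le> B * norm (f' v0 w)"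
  obtains r where "r > 0" "inj_on f (L \<inter> ball v0 r)"
proof -
  obtain r1 where "r1 > 0" "ball v0 r1 \<subseteq> V"
    using assms(1,2) open_contains_ball by blast
  have "1 / (2 * B) > 0"
    using \<open>B > 0\<close> by simp
  then obtain r2 where "r2 > 0" and r2: "\<And>v. dist v v0 < r2 \<Longrightarrow> dist (f' v) (f' v0) < 1 / (2 * B)"
    using cont unfolding continuous_at_eps_delta by blast
  define r where "r = min r1 r2"
  have "inj_on f (L \<inter> ball v0 r)"
  proof (rule inj_onI)
    fix a b
    assume a: "a \<in> L \<inter> ball v0 r" and b: "b \<in> L \<inter> ball v0 r" and "f a = f b"
    have segment: "a + t *\<^sub>R (b - a) \<in> ball v0 r" if "t \<in> {0..1}" for t
    proof -
      have "(1 - t) *\<^sub>R a + t *\<^sub>R b \<in> ball v0 r"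
        using convex_ball[of v0 r] a b that unfolding convex_alt by auto
      moreover have "(1 - t) *\<^sub>R a + t *\<^sub>R b = a + t *\<^sub>R (b - a)"
        by (simp add: algebra_simps)
      ultimately show ?thesis
        by simp
    qed
    have deriv_ball: "(f has_derivative f' y) (at y within ball v0 r)" if "y \<in> ball v0 r" for y
      using that \<open>ball v0 r1 \<subseteq> V\<close>
      by (intro has_derivative_at_withinI[OF deriv]) (auto simp: r_def)
    have close: "onorm (blinfun_apply (f' y) - blinfun_apply (f' v0)) \<le> 1 / (2 * B)"
      if "y \<in> ball v0 r" for y
    proof -
      have "onorm (blinfun_apply (f' y) - blinfun_apply (f' v0)) = dist (f' y) (f' v0)"
        by (simp add: dist_norm norm_blinfun.rep_eq minus_blinfun.rep_eq fun_diff_def)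
      then show ?thesis
        using r2[of y] that by (simp add: r_def dist_commute)
    qed
    have "v0 \<in> ball v0 r"
      using \<open>r1 > 0\<close> \<open>r2 > 0\<close> by (simp add: r_def)
    from differentiable_bound_linearization[OF segment deriv_ball close this]
    have "2 * (B * norm (f' v0 (b - a))) \<le> norm (b - a)"
      using \<open>f a = f b\<close> \<open>B > 0\<close> by (simp add: field_simps)
    moreover have "norm (b - a) \<le> B * norm (f' v0 (b - a))"
      using a b L by (intro lower) (simp add: subspace_diff)
    ultimately have "norm (b - a) \<le> 0"
      by linarith
    then show "a = b"
      by simp
  qed
  moreover have "r > 0"
    using \<open>r1 > 0\<close> \<open>r2 > 0\<close> by (simp add: r_def)
  ultimately show ?thesis
    using that by blast
qed

definition C1_chart ::
    "'a::real_normed_vector set \<Rightarrow> 'a set \<Rightarrow> 'a set \<Rightarrow> ('a \<Rightarrow> 'a) \<Rightarrow> ('a \<Rightarrow> 'a) \<Rightarrow> 'a set \<Rightarrow>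
      ('a \<Rightarrow> 'a \<Rightarrow>\<^sub>L 'a) \<Rightarrow> ('a \<Rightarrow> 'a \<Rightarrow>\<^sub>L 'a) \<Rightarrow> bool" where
  "C1_chart M U V \<phi> \<psi> L \<phi>' \<psi>' \<longleftrightarrow>
     open U \<and> open V \<and> subspace L \<and> (\<forall>u\<in>U. \<psi> (\<phi> u) = u) \<and>
     \<phi> ` (M \<inter> U) = V \<inter> L \<and>
     (\<forall>u\<in>U. (\<phi> has_derivative blinfun_apply (\<phi>' u)) (at u)) \<and>
     (\<forall>v\<in>V. (\<psi> has_derivative blinfun_apply (\<psi>' v)) (at v)) \<and>
     (\<forall>v\<in>V. isCont \<psi>' v) \<and>
     (\<forall>u\<in>U. \<forall>w. \<phi>' u (\<psi>' (\<phi> u) w) = w)"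

lemma C2_submanifold_C1_chart:
  fixes M :: "(real^'n::finite) set"
  assumes "C2_submanifold M" "x \<in> M"
  obtains U V \<phi> \<psi> L \<phi>' \<psi>' where "C1_chart M U V \<phi> \<psi> L \<phi>' \<psi>'" "x \<in> U"
proof -
  obtain U V \<phi> \<psi> L where chart: "open U" "x \<in> U" "open V" "subspace L"
      "\<phi> ` U = V" "\<forall>u\<in>U. \<psi> (\<phi> u) = u" "\<forall>v\<in>V. \<phi> (\<psi> v) = v"
      "C2_on U \<phi>" "C2_on V \<psi>" "\<phi> ` (M \<inter> U) = V \<inter> L"
    using assms unfolding C2_submanifold_def by metis
  obtain \<phi>' where \<phi>': "\<forall>u\<in>U. (\<phi> has_derivative blinfun_apply (\<phi>' u)) (at u)"
    using chart(8) unfolding C2_on_def by blast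
  obtain \<psi>' \<psi>'' where \<psi>': "\<forall>v\<in>V. (\<psi> has_derivative blinfun_apply (\<psi>' v)) (at v)"
      and \<psi>'': "\<forall>v\<in>V. (\<psi>' has_derivative blinfun_apply (\<psi>'' v)) (at v)"
    using chart(9) unfolding C2_on_def by blast
  have inverse: "\<phi>' u (\<psi>' (\<phi> u) w) = w" if "u \<in> U" for u w
  proof -
    have "\<phi> u \<in> V"
      using chart(5) that by blast
    have "(\<phi> has_derivative blinfun_apply (\<phi>' u)) (at (\<psi> (\<phi> u)))"
      using \<phi>' chart(6) that by simp
    with \<psi>' \<open>\<phi> u \<in> V\<close> have "((\<phi> \<circ> \<psi>) has_derivative (\<phi>' u \<circ> \<psi>' (\<phi> u))) (at (\<phi> u))"
      by (intro diff_chain_at) auto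
    moreover have "((\<phi> \<circ> \<psi>) has_derivative id) (at (\<phi> u))"
      by (rule has_derivative_transform_within_open[OF has_derivative_id chart(3) \<open>\<phi> u \<in> V\<close>])
        (use chart(7) in simp)
    ultimately have "blinfun_apply (\<phi>' u) \<circ> blinfun_apply (\<psi>' (\<phi> u)) = id"
      by (rule has_derivative_unique)
    then show ?thesis
      by (metis comp_apply id_apply)
  qed
  have "\<forall>v\<in>V. isCont \<psi>' v"
    using \<psi>'' has_derivative_continuous by blast
  with chart \<phi>' \<psi>' inverse have "C1_chart M U V \<phi> \<psi> L \<phi>' \<psi>'"
    unfolding C1_chart_def by blast
  with chart(2) show ?thesis
    using that by blast
qed

lemma C1_chartD:
  assumes "C1_chart M U V \<phi> \<psi> L \<phi>' \<psi>'"
  shows "open U" "open V" "subspace L"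
    and "\<And>u. u \<in> U \<Longrightarrow> \<psi> (\<phi> u) = u"
    and "\<And>u. u \<in> M \<inter> U \<Longrightarrow> \<phi> u \<in> V \<inter> L"
    and "\<And>v. v \<in> V \<inter> L \<Longrightarrow> \<psi> v \<in> M"
    and "\<And>u. u \<in> U \<Longrightarrow> (\<phi> has_derivative blinfun_apply (\<phi>' u)) (at u)"
    and "\<And>v. v \<in> V \<Longrightarrow> (\<psi> has_derivative blinfun_apply (\<psi>' v)) (at v)"
    and "\<And>v. v \<in> V \<Longrightarrow> isCont \<psi>' v"
    and "\<And>u w. u \<in> U \<Longrightarrow> \<phi>' u (\<psi>' (\<phi> u) w) = w"
proof -
  show "\<psi> v \<in> M" if "v \<in> V \<inter> L" for v
  proof -
    have "v \<in> \<phi> ` (M \<inter> U)"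
      using assms that unfolding C1_chart_def by simp
    then obtain m where "m \<in> M \<inter> U" "v = \<phi> m"
      by blast
    then show ?thesis
      using assms unfolding C1_chart_def by simp
  qed
  show "\<phi> u \<in> V \<inter> L" if "u \<in> M \<inter> U" for u
    using assms that unfolding C1_chart_def by blast
qed (use assms in \<open>simp_all add: C1_chart_def\<close>)

definition locally_fixed :: "'a::topological_space set \<Rightarrow> ('a \<Rightarrow> 'a) \<Rightarrow> 'a \<Rightarrow> bool" where
  "locally_fixed M s x \<longleftrightarrow> (\<forall>\<^sub>F z in nhds x. z \<in> M \<longrightarrow> s z = z)"

lemma open_locally_fixed: "open {x. locally_fixed M s x}"
proof -
  have "\<exists>T. open T \<and> x \<in> T \<and> T \<subseteq> {x. locally_fixed M s x}" if "locally_fixed M s x" for x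
  proof -
    have "\<forall>\<^sub>F y in nhds x. locally_fixed M s y"
      using that unfolding locally_fixed_def by (simp add: eventually_eventually)
    then show ?thesis
      by (auto simp: eventually_nhds)
  qed
  then show ?thesis
    by (auto simp: open_subopen[of "{x. locally_fixed M s x}"])
qed

lemma C1_chart_derivative_fixed:
  assumes chart: "C1_chart M U V \<phi> \<psi> L \<phi>' \<psi>'" and s: "bounded_linear s"
    and a: "a \<in> M" "a \<in> U" "locally_fixed M s a" and "l \<in> L"
  shows "s (\<psi>' (\<phi> a) l) = \<psi>' (\<phi> a) l"
proof -
  have "\<phi> a \<in> V \<inter> L"
    using C1_chartD(5)[OF chart] a by blast
  then have \<psi>': "(\<psi> has_derivative blinfun_apply (\<psi>' (\<phi> a))) (at (\<phi> a))"
    using C1_chartD(8)[OF chart] by blast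
  have "\<forall>\<^sub>F u in nhds (\<phi> a). u \<in> V"
    using C1_chartD(2)[OF chart] \<open>\<phi> a \<in> V \<inter> L\<close> by (blast intro: eventually_nhds_in_open)
  moreover have "\<forall>\<^sub>F u in nhds (\<phi> a). \<psi> u \<in> M \<longrightarrow> s (\<psi> u) = \<psi> u"
    using eventually_nhds_isCont_compose[OF has_derivative_continuous[OF \<psi>']] a
    by (simp add: C1_chartD(4)[OF chart] locally_fixed_def)
  ultimately have "\<forall>\<^sub>F u in nhds (\<phi> a). u \<in> L \<longrightarrow> s (\<psi> u) = \<psi> u"
    by (rule eventually_elim2) (use C1_chartD(6)[OF chart] in blast)
  with has_derivative_fixed_on_subspace[OF s \<psi>' C1_chartD(3)[OF chart]] \<open>\<phi> a \<in> V \<inter> L\<close> \<open>l \<in> L\<close>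
  show ?thesis
    by blast
qed

lemma C1_chart_derivative_fixed_at_limit:
  assumes chart: "C1_chart M U V \<phi> \<psi> L \<phi>' \<psi>'" and s: "bounded_linear s"
    and x: "x \<in> M" "x \<in> U" "x \<in> closure {a \<in> M. locally_fixed M s a}" and "l \<in> L"
  shows "s (\<psi>' (\<phi> x) l) = \<psi>' (\<phi> x) l"
proof -
  define F where "F v = s (\<psi>' v l) - \<psi>' v l" for v
  have \<phi>: "isCont \<phi> x"
    using C1_chartD(7)[OF chart x(2)] by (rule has_derivative_continuous)
  have "isCont \<psi>' (\<phi> x)"
    using C1_chartD(5,9)[OF chart] x(1,2) by blast
  then have "isCont F (\<phi> x)"
    unfolding F_def by (intro continuous_intros bounded_linear.continuous[OF s])
  obtain X where X: "\<forall>n. X n \<in> {a \<in> M. locally_fixed M s a}" "X \<longlonglongrightarrow> x"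
    using x(3) closure_sequential by blast
  have "(\<lambda>n. F (\<phi> (X n))) \<longlonglongrightarrow> F (\<phi> x)"
    by (intro isCont_tendsto_compose[OF \<open>isCont F (\<phi> x)\<close>] isCont_tendsto_compose[OF \<phi> X(2)])
  moreover have "\<forall>\<^sub>F n in sequentially. F (\<phi> (X n)) = 0"
  proof -
    have "\<forall>\<^sub>F n in sequentially. X n \<in> U"
      by (rule topological_tendstoD[OF X(2) C1_chartD(1)[OF chart] x(2)])
    then show ?thesis
      by (rule eventually_mono)
        (use X(1) C1_chart_derivative_fixed[OF chart s _ _ _ \<open>l \<in> L\<close>] in \<open>simp add: F_def\<close>)
  qed
  then have "(\<lambda>n. F (\<phi> (X n))) \<longlonglongrightarrow> 0"
    by (rule tendsto_eventually)
  ultimately have "F (\<phi> x) = 0"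
    by (rule LIMSEQ_unique)
  then show ?thesis
    by (simp add: F_def)
qed

lemma C1_chart_orbit_sum_inj:
  fixes s :: "'a::euclidean_space \<Rightarrow> 'a"
  assumes chart: "C1_chart M U V \<phi> \<psi> L \<phi>' \<psi>'" and x: "x \<in> M" "x \<in> U"
    and s: "linear s" "s ^^ k = id" "k > 0"
    and tangent: "\<And>l. l \<in> L \<Longrightarrow> s (\<psi>' (\<phi> x) l) = \<psi>' (\<phi> x) l"
  obtains r where "r > 0" "inj_on (\<lambda>v. orbit_sum s k (\<psi> v)) (L \<inter> ball (\<phi> x) r)"
proof -
  define P where "P = orbit_sum s k"
  have P: "bounded_linear P"
    unfolding P_def using linear_orbit_sum[OF s(1)] linear_conv_bounded_linear by blast
  have P_comp: "blinfun_apply (Blinfun P o\<^sub>L F) = (\<lambda>w. P (F w))" for F :: "'a \<Rightarrow>\<^sub>L 'a"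
    by (rule ext) (simp add: bounded_linear_Blinfun_apply[OF P])
  have "\<phi> x \<in> V"
    using C1_chartD(5)[OF chart] x by blast
  define B where "B = (norm (\<phi>' x) + 1) / real k"
  have "B > 0"
    using s(3) by (simp add: B_def add_nonneg_pos)
  have lower: "norm w \<le> B * norm ((Blinfun P o\<^sub>L \<psi>' (\<phi> x)) w)" if "w \<in> L" for w
  proof -
    have "P (\<psi>' (\<phi> x) w) = real k *\<^sub>R \<psi>' (\<phi> x) w"
      unfolding P_def using tangent[OF that] by (rule orbit_sum_fixed_point)
    then have "B * norm ((Blinfun P o\<^sub>L \<psi>' (\<phi> x)) w) = (norm (\<phi>' x) + 1) * norm (\<psi>' (\<phi> x) w)"
      using s(3) by (simp add: P_comp B_def)
    moreover have "norm w \<le> norm (\<phi>' x) * norm (\<psi>' (\<phi> x) w)"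
      using norm_blinfun[of "\<phi>' x" "\<psi>' (\<phi> x) w"] C1_chartD(10)[OF chart x(2)] by simp
    ultimately show ?thesis
      by (simp add: distrib_right add_increasing2)
  qed
  have deriv: "((\<lambda>v. P (\<psi> v)) has_derivative blinfun_apply (Blinfun P o\<^sub>L \<psi>' v)) (at v)"
    if "v \<in> V" for v
    unfolding P_comp by (rule bounded_linear.has_derivative[OF P C1_chartD(8)[OF chart that]])
  have "isCont (\<lambda>v. Blinfun P o\<^sub>L \<psi>' v) (\<phi> x)"
    by (rule bounded_bilinear.continuous[OF bounded_bilinear_blinfun_compose continuous_const
          C1_chartD(9)[OF chart \<open>\<phi> x \<in> V\<close>]])
  from inj_on_subspace_ball_of_derivative[OF C1_chartD(2)[OF chart] \<open>\<phi> x \<in> V\<close> deriv this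
      C1_chartD(3)[OF chart] \<open>B > 0\<close> lower]
  show ?thesis
    using that unfolding P_def by blast
qed

lemma locally_fixed_at_limit_point:
  fixes s :: "'a::euclidean_space \<Rightarrow> 'a"
  assumes chart: "C1_chart M U V \<phi> \<psi> L \<phi>' \<psi>'" and x: "x \<in> M" "x \<in> U"
    and s: "linear s" "s ^^ k = id" "k > 0"
    and symmetric: "s x = x \<Longrightarrow> \<exists>d>0. s ` (M \<inter> ball x d) \<subseteq> M"
    and limit: "x \<in> closure {a \<in> M. locally_fixed M s a}"
  shows "locally_fixed M s x"
proof -
  have bl: "bounded_linear s"
    using s(1) linear_conv_bounded_linear by blast
  have "s x = x"
  proof -
    have "{a \<in> M. locally_fixed M s a} \<subseteq> {z. s z = z}"
      by (auto simp: locally_fixed_def dest: eventually_nhds_x_imp_x)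
    moreover have "closed {z. s z = z}"
      by (intro closed_Collect_eq linear_continuous_on bl continuous_on_id)
    ultimately show ?thesis
      using limit closure_minimal by blast
  qed
  then obtain d where "d > 0" and d: "s ` (M \<inter> ball x d) \<subseteq> M"
    using symmetric by blast
  have tangent: "s (\<psi>' (\<phi> x) l) = \<psi>' (\<phi> x) l" if "l \<in> L" for l
    using C1_chart_derivative_fixed_at_limit[OF chart bl x limit that] .
  obtain r where "r > 0" and inj: "inj_on (\<lambda>v. orbit_sum s k (\<psi> v)) (L \<inter> ball (\<phi> x) r)"
    using C1_chart_orbit_sum_inj[OF chart x s tangent] by blast
  have near: "\<forall>\<^sub>F y in nhds x. y \<in> U \<and> \<phi> y \<in> ball (\<phi> x) r"
    using eventually_nhds_in_open[OF C1_chartD(1)[OF chart] x(2)]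
      eventually_nhds_isCont_compose[OF has_derivative_continuous[OF C1_chartD(7)[OF chart x(2)]]
        eventually_nhds_ball[OF \<open>r > 0\<close>]]
    by (rule eventually_conj)
  have "\<forall>\<^sub>F y in nhds (s x). y \<in> U \<and> \<phi> y \<in> ball (\<phi> x) r"
    using near \<open>s x = x\<close> by simp
  then have "\<forall>\<^sub>F z in nhds x. s z \<in> U \<and> \<phi> (s z) \<in> ball (\<phi> x) r"
    by (rule eventually_nhds_isCont_compose[OF linear_continuous_at[OF bl]])
  with near eventually_nhds_ball[OF \<open>d > 0\<close>]
  show ?thesis
    unfolding locally_fixed_def
  proof eventually_elim
    case (elim z)
    show "z \<in> M \<longrightarrow> s z = z"
    proof
      assume "z \<in> M"
      then have "s z \<in> M"
        using d elim by blast
      have "\<phi> z \<in> L \<inter> ball (\<phi> x) r" "\<phi> (s z) \<in> L \<inter> ball (\<phi> x) r"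
        using C1_chartD(5)[OF chart] elim \<open>z \<in> M\<close> \<open>s z \<in> M\<close> by blast+
      moreover have "orbit_sum s k (\<psi> (\<phi> z)) = orbit_sum s k (\<psi> (\<phi> (s z)))"
        using C1_chartD(4)[OF chart] elim orbit_sum_apply[OF s(2)] by simp
      ultimately have "\<phi> z = \<phi> (s z)"
        using inj by (auto dest: inj_onD)
      then show "s z = z"
        using C1_chartD(4)[OF chart] elim by metis
    qed
  qed
qed

lemma closedin_locally_fixed_perm_act:
  assumes M: "C2_submanifold M" "locally_symmetric M" and \<sigma>: "\<sigma> permutes UNIV"
  shows "closedin (top_of_set M) {x \<in> M. locally_fixed M (perm_act \<sigma>) x}"
  unfolding closedin_limpt
proof (intro conjI allI impI)
  fix x
  assume x: "x islimpt {x \<in> M. locally_fixed M (perm_act \<sigma>) x} \<and> x \<in> M"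
  obtain k where k: "k > 0" "perm_act \<sigma> ^^ k = id"
    using perm_act_finite_order[OF \<sigma>] by blast
  obtain U V \<phi> \<psi> L \<phi>' \<psi>' where chart: "C1_chart M U V \<phi> \<psi> L \<phi>' \<psi>'" "x \<in> U"
    using C2_submanifold_C1_chart[OF M(1)] x by blast
  have "locally_fixed M (perm_act \<sigma>) x"
  proof (rule locally_fixed_at_limit_point[OF chart(1) _ chart(2) perm_act_linear k(2,1)])
    show "x \<in> M"
      using x by blast
    then show "\<exists>d>0. perm_act \<sigma> ` (M \<inter> ball x d) \<subseteq> M" if "perm_act \<sigma> x = x"
      using locally_symmetric_fixed_point[OF M(2) _ \<sigma> that] by blast
    show "x \<in> closure {x \<in> M. locally_fixed M (perm_act \<sigma>) x}"
      using x by (simp add: closure_def)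
  qed
  then show "x \<in> {x \<in> M. locally_fixed M (perm_act \<sigma>) x}"
    using x by blast
qed auto

theorem corollary3p18:
  fixes M :: "(real^'n::{finite,linorder}) set"
    and xbar :: "real^('n::{finite,linorder})" and \<sigma> :: "'n::{finite,linorder} \<Rightarrow> 'n" and \<delta> :: real
  assumes "locally_symmetric_C2_submanifold M"
    and "xbar \<in> M" and "\<sigma> permutes UNIV" and "\<delta> > 0"
    and "M \<inter> ball xbar \<delta> \<subseteq> Delta \<sigma>"
  shows "M \<subseteq> Delta_perp_perp \<sigma>"
proof -
  have M: "connected M" "C2_submanifold M" "locally_symmetric M"
    using assms(1) unfolding locally_symmetric_C2_submanifold_def by auto
  have fixed: "Delta_perp_perp \<sigma> = {x. perm_act \<sigma> x = x}"
    by (rule Delta_perp_perp_eq_fixed_points[OF assms(3)])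
  let ?A = "{x \<in> M. locally_fixed M (perm_act \<sigma>) x}"
  have "M \<inter> ball xbar \<delta> \<subseteq> {x. perm_act \<sigma> x = x}"
    using assms(5) Delta_subset_Delta_perp_perp fixed by blast
  then have "locally_fixed M (perm_act \<sigma>) xbar"
    unfolding locally_fixed_def
    by (intro eventually_mono[OF eventually_nhds_ball[OF assms(4)]]) blast
  with assms(2) have "xbar \<in> ?A"
    by blast
  moreover have "openin (top_of_set M) ?A"
    using openin_open_Int[OF open_locally_fixed] by (simp add: Collect_conj_eq Int_commute)
  moreover note closedin_locally_fixed_perm_act[OF M(2,3) assms(3)]
  ultimately have "?A = M"
    using M(1) unfolding connected_clopen by blast
  then show ?thesis
    unfolding fixed locally_fixed_def by (auto dest: eventually_nhds_x_imp_x)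
qed

end
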